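(* If $G$ is a connected bipartite graph with $n(G)\ge 3$ vertices, then $\dim_{n\ell}(G)=\dim(G)$.
   Context: Graphs are finite, simple and connected; $d_G(u,v)$ is the shortest-path distance and $n(G)$ the number of vertices. A set $X\subseteq V(G)$ resolves two vertices $u,v$ if some $x\in X$ satisfies $d_G(u,x)\neq d_G(v,x)$. $X$ is a resolving set if it resolves every pair of distinct vertices; the metric dimension $\dim(G)$ is the minimum size of a resolving set. $X$ is a nonlocal resolving set if it resolves every pair of distinct non-adjacent vertices; the nonlocal metric dimension $\dim_{n\ell}(G)$ is the minimum size of a nonlocal resolving set (so $\dim_{n\ell}(K_n)=0$), and a nonlocal metric basis is a nonlocal resolving set of this minimum size. *)

theory Defs
  imports Main
begin

definition simple_graph :: "'a set \<Rightarrow> ('a \<Rightarrow> 'a \<Rightarrow> bool) \<Rightarrow> bool" where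
  "simple_graph V E \<longleftrightarrow> finite V \<and> (\<forall>u v. E u v \<longrightarrow> u \<in> V \<and> v \<in> V)
     \<and> (\<forall>u v. E u v \<longrightarrow> E v u) \<and> (\<forall>u. \<not> E u u)"

definition is_walk :: "'a set \<Rightarrow> ('a \<Rightarrow> 'a \<Rightarrow> bool) \<Rightarrow> 'a list \<Rightarrow> 'a \<Rightarrow> 'a \<Rightarrow> bool" where
  "is_walk V E p u v \<longleftrightarrow> p \<noteq> [] \<and> hd p = u \<and> last p = v \<and> set p \<subseteq> V
     \<and> (\<forall>i. Suc i < length p \<longrightarrow> E (p ! i) (p ! Suc i))"

definition graph_connected :: "'a set \<Rightarrow> ('a \<Rightarrow> 'a \<Rightarrow> bool) \<Rightarrow> bool" where
  "graph_connected V E \<longleftrightarrow> V \<noteq> {} \<and> (\<forall>u\<in>V. \<forall>v\<in>V. \<exists>p. is_walk V E p u v)"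

definition gdist :: "'a set \<Rightarrow> ('a \<Rightarrow> 'a \<Rightarrow> bool) \<Rightarrow> 'a \<Rightarrow> 'a \<Rightarrow> nat" where
  "gdist V E u v = (LEAST n. \<exists>p. is_walk V E p u v \<and> length p = Suc n)"

definition bipartite :: "'a set \<Rightarrow> ('a \<Rightarrow> 'a \<Rightarrow> bool) \<Rightarrow> bool" where
  "bipartite V E \<longleftrightarrow> (\<exists>A B. A \<union> B = V \<and> A \<inter> B = {}
     \<and> (\<forall>u v. E u v \<longrightarrow> (u \<in> A \<and> v \<in> B) \<or> (u \<in> B \<and> v \<in> A)))"

definition resolves :: "'a set \<Rightarrow> ('a \<Rightarrow> 'a \<Rightarrow> bool) \<Rightarrow> 'a set \<Rightarrow> 'a \<Rightarrow> 'a \<Rightarrow> bool" where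
  "resolves V E X u v \<longleftrightarrow> (\<exists>x\<in>X. gdist V E u x \<noteq> gdist V E v x)"

definition resolving_set :: "'a set \<Rightarrow> ('a \<Rightarrow> 'a \<Rightarrow> bool) \<Rightarrow> 'a set \<Rightarrow> bool" where
  "resolving_set V E X \<longleftrightarrow> X \<subseteq> V \<and>
     (\<forall>u\<in>V. \<forall>v\<in>V. u \<noteq> v \<longrightarrow> resolves V E X u v)"

definition nonlocal_resolving_set :: "'a set \<Rightarrow> ('a \<Rightarrow> 'a \<Rightarrow> bool) \<Rightarrow> 'a set \<Rightarrow> bool" where
  "nonlocal_resolving_set V E X \<longleftrightarrow> X \<subseteq> V \<and>
     (\<forall>u\<in>V. \<forall>v\<in>V. u \<noteq> v \<and> \<not> E u v \<longrightarrow> resolves V E X u v)"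

definition metric_dim :: "'a set \<Rightarrow> ('a \<Rightarrow> 'a \<Rightarrow> bool) \<Rightarrow> nat" where
  "metric_dim V E = (LEAST k. \<exists>X. resolving_set V E X \<and> card X = k)"

definition nonlocal_metric_dim :: "'a set \<Rightarrow> ('a \<Rightarrow> 'a \<Rightarrow> bool) \<Rightarrow> nat" where
  "nonlocal_metric_dim V E = (LEAST k. \<exists>X. nonlocal_resolving_set V E X \<and> card X = k)"

end

theory Submission
  imports Defs
begin

text \<open>In a bipartite graph every walk changes sides at each step, so the distance from a
vertex x to u is even exactly when u lies on the side of x. Two adjacent vertices lie on
different sides, hence their distances to any x differ in parity and every nonempty set
resolves them. A nonlocal resolving set is nonempty once there are two distinct
non-adjacent vertices, which three vertices of a triangle-free graph always provide.\<close>

lemma bipartite_obtain_side: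
  assumes "bipartite V E"
  obtains A where "\<And>u v. E u v \<Longrightarrow> u \<in> A \<longleftrightarrow> v \<notin> A"
proof -
  obtain A B where "A \<inter> B = {}" and "\<forall>u v. E u v \<longrightarrow> (u \<in> A \<and> v \<in> B) \<or> (u \<in> B \<and> v \<in> A)"
    using assms unfolding bipartite_def by blast
  then have "u \<in> A \<longleftrightarrow> v \<notin> A" if "E u v" for u v
    using that by blast
  then show ?thesis by (rule that)
qed

lemma walk_parity:
  assumes side: "\<And>u v. E u v \<Longrightarrow> u \<in> A \<longleftrightarrow> v \<notin> A"
    and "p \<noteq> []" and "\<forall>i. Suc i < length p \<longrightarrow> E (p ! i) (p ! Suc i)"
  shows "(hd p \<in> A \<longleftrightarrow> last p \<in> A) \<longleftrightarrow> even (length p - 1)"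
  using assms(2,3)
proof (induction p)
  case Nil
  then show ?case by simp
next
  case (Cons a p)
  show ?case
  proof (cases "p = []")
    case True
    then show ?thesis by simp
  next
    case False
    have "E a (hd p)"
      using Cons.prems(2)[rule_format, of 0] False by (simp add: hd_conv_nth)
    then have "a \<in> A \<longleftrightarrow> hd p \<notin> A" by (rule side)
    moreover have "\<forall>i. Suc i < length p \<longrightarrow> E (p ! i) (p ! Suc i)"
    proof (intro allI impI)
      fix i assume "Suc i < length p"
      then show "E (p ! i) (p ! Suc i)" using Cons.prems(2)[rule_format, of "Suc i"] by simp
    qed
    then have "(hd p \<in> A \<longleftrightarrow> last p \<in> A) \<longleftrightarrow> even (length p - 1)"
      by (rule Cons.IH[OF False])
    moreover have "length (a # p) - 1 = Suc (length p - 1)" using False by simp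
    ultimately show ?thesis using False by (cases "hd p \<in> A"; cases "last p \<in> A") simp_all
  qed
qed

lemma shortest_walk_exists:
  assumes "graph_connected V E" and "u \<in> V" and "v \<in> V"
  obtains p where "is_walk V E p u v" and "length p = Suc (gdist V E u v)"
proof -
  obtain p where p: "is_walk V E p u v"
    using assms unfolding graph_connected_def by blast
  then have "length p = Suc (length p - 1)"
    unfolding is_walk_def by (cases p) auto
  with p have "\<exists>n q. is_walk V E q u v \<and> length q = Suc n" by blast
  then have "\<exists>q. is_walk V E q u v \<and> length q = Suc (gdist V E u v)"
    unfolding gdist_def by (elim exE) (rule LeastI_ex, blast)
  then obtain q where "is_walk V E q u v" "length q = Suc (gdist V E u v)" by blast
  then show ?thesis by (rule that)
qed

lemma gdist_parity:
  assumes side: "\<And>u v. E u v \<Longrightarrow> u \<in> A \<longleftrightarrow> v \<notin> A"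
    and "graph_connected V E" and "u \<in> V" and "x \<in> V"
  shows "(u \<in> A \<longleftrightarrow> x \<in> A) \<longleftrightarrow> even (gdist V E u x)"
proof -
  obtain p where p: "is_walk V E p u x" "length p = Suc (gdist V E u x)"
    using assms(2-4) by (rule shortest_walk_exists)
  then have "p \<noteq> []" "\<forall>i. Suc i < length p \<longrightarrow> E (p ! i) (p ! Suc i)"
    unfolding is_walk_def by auto
  with walk_parity[OF side] have "(hd p \<in> A \<longleftrightarrow> last p \<in> A) \<longleftrightarrow> even (length p - 1)"
    by blast
  then show ?thesis using p unfolding is_walk_def by simp
qed

lemma bipartite_gdist_adjacent_neq:
  assumes "bipartite V E" and "graph_connected V E"
    and "E u v" and "u \<in> V" and "v \<in> V" and "x \<in> V"
  shows "gdist V E u x \<noteq> gdist V E v x"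
proof -
  obtain A where side: "\<And>u v. E u v \<Longrightarrow> u \<in> A \<longleftrightarrow> v \<notin> A"
    using bipartite_obtain_side[OF assms(1)] by blast
  have "u \<in> A \<longleftrightarrow> v \<notin> A" using side assms(3) .
  moreover have "(u \<in> A \<longleftrightarrow> x \<in> A) \<longleftrightarrow> even (gdist V E u x)"
    and "(v \<in> A \<longleftrightarrow> x \<in> A) \<longleftrightarrow> even (gdist V E v x)"
    using gdist_parity[OF side assms(2)] assms(4-6) by blast+
  ultimately show ?thesis by auto
qed

lemma bipartite_nonadjacent_pair:
  assumes "bipartite V E" and "card V \<ge> 3"
  obtains u v where "u \<in> V" "v \<in> V" "u \<noteq> v" "\<not> E u v"
proof -
  obtain a b c where abc: "a \<in> V" "b \<in> V" "c \<in> V" "a \<noteq> b" "a \<noteq> c" "b \<noteq> c"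
    using assms(2) by (auto simp: card_le_Suc_iff numeral_3_eq_3 dest!: Suc_le_D)
  obtain A where side: "\<And>u v. E u v \<Longrightarrow> u \<in> A \<longleftrightarrow> v \<notin> A"
    using bipartite_obtain_side[OF assms(1)] by blast
  show ?thesis
  proof (cases "E a b \<and> E a c")
    case True
    have "\<not> E b c"
    proof
      assume "E b c"
      with True side[of a b] side[of a c] side[of b c] show False by blast
    qed
    then show ?thesis using that[of b c] abc by blast
  next
    case False
    then show ?thesis using that[of a b] that[of a c] abc by blast
  qed
qed

lemma nonlocal_resolving_set_iff_resolving_set:
  assumes "bipartite V E" and "graph_connected V E" and "card V \<ge> 3"
  shows "nonlocal_resolving_set V E X \<longleftrightarrow> resolving_set V E X"
proof
  assume nl: "nonlocal_resolving_set V E X"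
  obtain y z where "y \<in> V" "z \<in> V" "y \<noteq> z" "\<not> E y z"
    using assms(1,3) by (rule bipartite_nonadjacent_pair)
  with nl obtain x where x: "x \<in> X" "x \<in> V"
    unfolding nonlocal_resolving_set_def resolves_def by blast
  have adjacent: "resolves V E X u v" if "u \<in> V" "v \<in> V" "E u v" for u v
    using bipartite_gdist_adjacent_neq[OF assms(1,2) that(3,1,2) x(2)] x(1)
    unfolding resolves_def by blast
  have "resolves V E X u v" if "u \<in> V" "v \<in> V" "u \<noteq> v" for u v
  proof (cases "E u v")
    case True
    with adjacent that show ?thesis by blast
  next
    case False
    with nl that show ?thesis unfolding nonlocal_resolving_set_def by blast
  qed
  with nl show "resolving_set V E X"
    unfolding nonlocal_resolving_set_def resolving_set_def by blast
next
  assume "resolving_set V E X"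
  then show "nonlocal_resolving_set V E X"
    unfolding resolving_set_def nonlocal_resolving_set_def by blast
qed

theorem proposition2p2:
  fixes V :: "'a set" and E :: "'a \<Rightarrow> 'a \<Rightarrow> bool"
  assumes "simple_graph V E"
    and "graph_connected V E"
    and "bipartite V E"
    and "card V \<ge> 3"
  shows "nonlocal_metric_dim V E = metric_dim V E"
  unfolding nonlocal_metric_dim_def metric_dim_def
    nonlocal_resolving_set_iff_resolving_set[OF assms(3,2,4)] ..

end
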